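(* Let $k\ge 1$ be an integer, $w>0$ a real number, and $\alpha=1/(k+1)$. The solution $u(z)$ of the differential equation \[ u''(z) - 2u'(z) + \left(1 - w k z^{k-1}\right)u(z) = 0,\qquad u(0)=-1,\ u'(0)=0, \] is \[ u(z) = z e^z \sum_{m\ge 0} \left(\frac{wk}{(k+1)^2}\right)^m \frac{z^{(k+1)m}}{m!\,(m+\alpha)_m} \;-\; e^z \sum_{m\ge 0} \left(\frac{wk}{(k+1)^2}\right)^m \frac{z^{(k+1)m}}{m!\,(m-\alpha)_m}, \] where $(x)_m = x(x-1)\cdots(x-m+1)$ denotes the falling factorial (with $(x)_0=1$).
   Context: In the paper $w=w(t)=\ell(t)/k!$ for a plane binary tree $t$ with $k$ nodes and $\ell(t)$ increasing labelings; the function $u$ arises from the Riccati substitution $S_t=-u'/u$ for the generating function $S_t$ of plane increasing binary trees avoiding fringe subtree shape $t$. *)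

theory Defs
  imports "HOL-Analysis.Analysis"
begin

definition falling_fact :: "real \<Rightarrow> nat \<Rightarrow> real" where
  "falling_fact x m = (\<Prod>i<m. x - real i)"

definition u_sol :: "nat \<Rightarrow> real \<Rightarrow> real \<Rightarrow> real" where
  "u_sol k w z =
     (let \<alpha> = 1 / real (k + 1); c = w * real k / real (k + 1) ^ 2 in
      z * exp z * (\<Sum>m. c ^ m * z ^ ((k + 1) * m) / (fact m * falling_fact (real m + \<alpha>) m))
      - exp z * (\<Sum>m. c ^ m * z ^ ((k + 1) * m) / (fact m * falling_fact (real m - \<alpha>) m)))"

end

theory Submission
  imports Defs
begin

text \<open>
  Writing u = exp z * v turns the equation into v'' = w k z^(k-1) v. With n = k + 1, both
  F(z^n) and z F(z^n) solve this equation whenever F satisfies t F'' + b F' = c F with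
  c = w k / n^2 and b = 1 - 1/n resp. b = 1 + 1/n: for exactly these two values of b the
  first-order terms cancel. The entire solution of t F'' + b F' = c F is the hypergeometric
  series 0F1(;b;c t), and since the falling factorial (m + s)_m is the rising factorial of 1 + s,
  the two series in the statement are these solutions. Uniqueness for the initial value problem
  follows from Gronwall's inequality for the energy y^2 + y'^2 of the difference of two solutions.
\<close>

definition linear_ode2_solution ::
    "(real \<Rightarrow> real) \<Rightarrow> (real \<Rightarrow> real) \<Rightarrow> (real \<Rightarrow> real) \<Rightarrow> (real \<Rightarrow> real) \<Rightarrow> bool" where
  "linear_ode2_solution a b y y' \<longleftrightarrow>
     (\<forall>z. (y has_real_derivative y' z) (at z)) \<and>
     (\<exists>y''. (\<forall>z. (y' has_real_derivative y'' z) (at z)) \<and>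
            (\<forall>z. y'' z + a z * y' z + b z * y z = 0))"

lemma linear_ode2_solution_diff:
  assumes "linear_ode2_solution a b y y'" "linear_ode2_solution a b v v'"
  shows "linear_ode2_solution a b (\<lambda>z. y z - v z) (\<lambda>z. y' z - v' z)"
proof -
  obtain y'' v'' where
    dy: "\<And>z. (y has_real_derivative y' z) (at z)" "\<And>z. (y' has_real_derivative y'' z) (at z)"
    and dv: "\<And>z. (v has_real_derivative v' z) (at z)" "\<And>z. (v' has_real_derivative v'' z) (at z)"
    and eq: "\<And>z. y'' z + a z * y' z + b z * y z = 0" "\<And>z. v'' z + a z * v' z + b z * v z = 0"
    using assms unfolding linear_ode2_solution_def by blast
  have "y'' z - v'' z + a z * (y' z - v' z) + b z * (y z - v z) = 0" for z
    using eq[of z] by (simp add: algebra_simps)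
  then show ?thesis
    unfolding linear_ode2_solution_def
    by (intro conjI allI exI[of _ "\<lambda>z. y'' z - v'' z"] DERIV_diff dy dv)
qed

lemma energy_deriv_bound:
  fixes p q a b :: real
  shows "\<bar>2 * p * q - 2 * a * q\<^sup>2 - 2 * b * p * q\<bar> \<le> (1 + 2 * \<bar>a\<bar> + \<bar>b\<bar>) * (p\<^sup>2 + q\<^sup>2)"
proof -
  have pq: "\<bar>2 * p * q\<bar> \<le> p\<^sup>2 + q\<^sup>2"
    using sum_squares_bound[of "\<bar>p\<bar>" "\<bar>q\<bar>"] by (simp add: abs_mult)
  have "\<bar>2 * p * q - 2 * a * q\<^sup>2 - 2 * b * p * q\<bar>
        \<le> \<bar>2 * p * q\<bar> + \<bar>2 * a * q\<^sup>2\<bar> + \<bar>2 * b * p * q\<bar>"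
    by linarith
  also have "\<dots> = \<bar>2 * p * q\<bar> + \<bar>a\<bar> * (2 * q\<^sup>2) + \<bar>b\<bar> * \<bar>2 * p * q\<bar>"
    by (simp add: abs_mult)
  also have "\<dots> \<le> (p\<^sup>2 + q\<^sup>2) + \<bar>a\<bar> * (2 * (p\<^sup>2 + q\<^sup>2)) + \<bar>b\<bar> * (p\<^sup>2 + q\<^sup>2)"
    by (intro add_mono mult_left_mono pq) auto
  finally show ?thesis by (simp add: algebra_simps)
qed

lemma deriv_le_mult_imp_nonpos:
  fixes E E' :: "real \<Rightarrow> real"
  assumes "0 \<le> x" "E 0 = 0"
    and "\<And>t. 0 \<le> t \<Longrightarrow> t \<le> x \<Longrightarrow> (E has_real_derivative E' t) (at t) \<and> E' t \<le> L * E t"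
  shows "E x \<le> 0"
proof -
  define g where "g t = E t * exp (- L * t)" for t
  have "g x \<le> g 0"
  proof (rule DERIV_nonpos_imp_nonincreasing[OF \<open>0 \<le> x\<close>])
    fix t assume "0 \<le> t" "t \<le> x"
    with assms(3) have dE: "(E has_real_derivative E' t) (at t)" and le: "E' t \<le> L * E t"
      by auto
    have "(g has_real_derivative (E' t - L * E t) * exp (- L * t)) (at t)"
      unfolding g_def by (rule derivative_eq_intros refl dE)+ (simp add: algebra_simps)
    moreover have "(E' t - L * E t) * exp (- L * t) \<le> 0"
      using le by (simp add: mult_nonpos_nonneg)
    ultimately show "\<exists>y. (g has_real_derivative y) (at t) \<and> y \<le> 0" by blast
  qed
  then show ?thesis
    using \<open>E 0 = 0\<close> by (simp add: g_def mult_le_0_iff)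
qed

lemma gronwall_zero:
  fixes E E' :: "real \<Rightarrow> real"
  assumes dE: "\<And>t. (E has_real_derivative E' t) (at t)" and "E 0 = 0"
    and bound: "\<And>t. \<bar>t\<bar> \<le> \<bar>x\<bar> \<Longrightarrow> \<bar>E' t\<bar> \<le> L * E t"
  shows "E x \<le> 0"
proof (cases "0 \<le> x")
  case True
  show ?thesis
  proof (rule deriv_le_mult_imp_nonpos[where E = E and E' = E' and L = L, OF True \<open>E 0 = 0\<close>])
    fix t assume "0 \<le> t" "t \<le> x"
    then show "(E has_real_derivative E' t) (at t) \<and> E' t \<le> L * E t"
      using dE bound[of t] by auto
  qed
next
  case False
  have "(\<lambda>t. E (- t)) (- x) \<le> 0"
  proof (rule deriv_le_mult_imp_nonpos[where E = "\<lambda>t. E (- t)" and E' = "\<lambda>t. - E' (- t)" and L = L])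
    fix t assume "0 \<le> t" "t \<le> - x"
    then show "((\<lambda>t. E (- t)) has_real_derivative - E' (- t)) (at t) \<and> - E' (- t) \<le> L * E (- t)"
      using bound[of "- t"] DERIV_mirror[THEN iffD1, OF dE] by auto
  qed (use False \<open>E 0 = 0\<close> in auto)
  then show ?thesis by simp
qed

lemma linear_ode2_solution_eq_0:
  assumes sol: "linear_ode2_solution a b y y'" and "y 0 = 0" "y' 0 = 0"
    and "continuous_on UNIV a" "continuous_on UNIV b"
  shows "y x = 0"
proof -
  obtain y'' where d1: "\<And>z. (y has_real_derivative y' z) (at z)"
    and d2: "\<And>z. (y' has_real_derivative y'' z) (at z)"
    and eq: "\<And>z. y'' z + a z * y' z + b z * y z = 0"
    using sol unfolding linear_ode2_solution_def by blast
  define L where "L t = 1 + 2 * \<bar>a t\<bar> + \<bar>b t\<bar>" for t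
  have "continuous_on {-\<bar>x\<bar>..\<bar>x\<bar>} L"
    unfolding L_def using assms(4,5)
    by (auto intro!: continuous_intros elim: continuous_on_subset)
  then obtain t0 where L_max: "\<And>t. \<bar>t\<bar> \<le> \<bar>x\<bar> \<Longrightarrow> L t \<le> L t0"
    using continuous_attains_sup[of "{-\<bar>x\<bar>..\<bar>x\<bar>}" L] by (force simp: abs_le_iff)
  define E where "E t = (y t)\<^sup>2 + (y' t)\<^sup>2" for t
  have dE: "(E has_real_derivative 2 * y t * y' t + 2 * y' t * y'' t) (at t)" for t
    unfolding E_def by (rule derivative_eq_intros refl d1 d2)+ simp
  have "E x \<le> 0"
  proof (rule gronwall_zero[OF dE])
    show "E 0 = 0" using assms(2,3) by (simp add: E_def)
    fix t assume "\<bar>t\<bar> \<le> \<bar>x\<bar>"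
    have y'': "y'' t = - a t * y' t - b t * y t"
      using eq[of t] by linarith
    have "2 * y t * y' t + 2 * y' t * y'' t
          = 2 * y t * y' t - 2 * a t * (y' t)\<^sup>2 - 2 * b t * y t * y' t"
      unfolding y'' by (simp add: algebra_simps power2_eq_square)
    then have "\<bar>2 * y t * y' t + 2 * y' t * y'' t\<bar> \<le> L t * E t"
      unfolding L_def E_def by (simp only: energy_deriv_bound)
    also have "\<dots> \<le> L t0 * E t"
      using L_max[OF \<open>\<bar>t\<bar> \<le> \<bar>x\<bar>\<close>] by (simp add: E_def mult_right_mono)
    finally show "\<bar>2 * y t * y' t + 2 * y' t * y'' t\<bar> \<le> L t0 * E t" .
  qed
  then have "(y x)\<^sup>2 \<le> 0"
    unfolding E_def using zero_le_power2[of "y' x"] by linarith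
  then show ?thesis by simp
qed

lemma linear_ode2_solution_unique:
  assumes "linear_ode2_solution a b y y'" "linear_ode2_solution a b v v'"
    and "y 0 = v 0" "y' 0 = v' 0" "continuous_on UNIV a" "continuous_on UNIV b"
  shows "y = v"
proof
  fix x
  have "y x - v x = 0"
    using linear_ode2_solution_eq_0[OF linear_ode2_solution_diff[OF assms(1,2)]] assms(3-6)
    by simp
  then show "y x = v x" by simp
qed

lemma linear_ode2_solution_exp_mult:
  assumes "linear_ode2_solution (\<lambda>_. 0) (\<lambda>z. - q z) v v'"
  shows "linear_ode2_solution (\<lambda>_. -2) (\<lambda>z. 1 - q z) (\<lambda>z. exp z * v z) (\<lambda>z. exp z * (v z + v' z))"
proof -
  obtain v'' where dv: "\<And>z. (v has_real_derivative v' z) (at z)"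
    and dv': "\<And>z. (v' has_real_derivative v'' z) (at z)"
    and eq: "\<And>z. v'' z = q z * v z"
    using assms unfolding linear_ode2_solution_def by fastforce
  define u'' where "u'' z = exp z * (v z + 2 * v' z + v'' z)" for z
  have "((\<lambda>z. exp z * v z) has_real_derivative exp z * (v z + v' z)) (at z)" for z
    by (rule derivative_eq_intros refl dv)+ (simp add: algebra_simps)
  moreover have "((\<lambda>z. exp z * (v z + v' z)) has_real_derivative u'' z) (at z)" for z
    unfolding u''_def by (rule derivative_eq_intros refl dv dv')+ (simp add: algebra_simps)
  moreover have "u'' z + -2 * (exp z * (v z + v' z)) + (1 - q z) * (exp z * v z) = 0" for z
    using eq[of z] by (simp add: u''_def algebra_simps)
  ultimately show ?thesis
    unfolding linear_ode2_solution_def by blast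
qed

lemma falling_fact_eq_pochhammer: "falling_fact (real m + s) m = pochhammer (s + 1) m"
proof (induction m)
  case (Suc m)
  have "falling_fact (real (Suc m) + s) (Suc m) = (real m + 1 + s) * falling_fact (real m + s) m"
    unfolding falling_fact_def by (subst prod.lessThan_Suc_shift) (simp add: algebra_simps)
  then show ?case
    using Suc by (simp add: pochhammer_Suc algebra_simps)
qed (simp add: falling_fact_def)

lemma power_le_pochhammer:
  fixes b :: real
  assumes "0 < b"
  shows "b ^ m \<le> pochhammer b m"
proof (induction m)
  case (Suc m)
  have "b ^ m * b \<le> pochhammer b m * (b + real m)"
    using Suc assms by (intro mult_mono) (auto simp: less_imp_le[OF pochhammer_pos])
  then show ?case
    by (simp add: pochhammer_Suc mult.commute)
qed simp

definition fps_0F1 :: "real \<Rightarrow> real \<Rightarrow> real fps" where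
  "fps_0F1 b c = Abs_fps (\<lambda>m. c ^ m / (fact m * pochhammer b m))"

lemma fps_conv_radius_0F1:
  assumes "0 < b"
  shows "fps_conv_radius (fps_0F1 b c) = \<infinity>"
proof -
  have "conv_radius (fps_nth (fps_0F1 b c)) \<ge> \<infinity>"
  proof (rule conv_radius_geI_ex')
    fix r :: real assume "0 < r"
    have bound: "norm (fps_nth (fps_0F1 b c) m * r ^ m) \<le> (\<bar>c\<bar> * r / b) ^ m / fact m" for m
    proof -
      have "norm (fps_nth (fps_0F1 b c) m * r ^ m) = \<bar>c\<bar> ^ m * r ^ m / (fact m * pochhammer b m)"
        using \<open>0 < r\<close> pochhammer_pos[OF assms, of m]
        by (simp add: fps_0F1_def abs_mult power_abs)
      also have "\<dots> \<le> \<bar>c\<bar> ^ m * r ^ m / (fact m * b ^ m)"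
        using assms power_le_pochhammer[OF assms, of m] pochhammer_pos[OF assms, of m] \<open>0 < r\<close>
        by (intro divide_left_mono mult_left_mono mult_pos_pos) auto
      also have "\<dots> = (\<bar>c\<bar> * r / b) ^ m / fact m"
        by (simp add: power_mult_distrib power_divide)
      finally show ?thesis .
    qed
    have "summable (\<lambda>m. (\<bar>c\<bar> * r / b) ^ m / fact m)"
      using summable_exp[of "\<bar>c\<bar> * r / b"] by (simp add: field_simps)
    then show "summable (\<lambda>m. fps_nth (fps_0F1 b c) m * of_real r ^ m)"
      using summable_comparison_test'[OF _ bound] by simp
  qed
  then show ?thesis
    by (simp add: fps_conv_radius_def)
qed

lemma fps_0F1_ode:
  assumes "0 < b"
  shows "fps_X * fps_deriv (fps_deriv (fps_0F1 b c)) + fps_const b * fps_deriv (fps_0F1 b c)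
         = fps_const c * fps_0F1 b c"
proof (rule fps_ext)
  fix n
  let ?a = "fps_nth (fps_0F1 b c)"
  have "b + real n > 0" using assms by simp
  moreover have "?a (Suc n) = c * ?a n / ((real n + 1) * (b + real n))"
    by (simp add: fps_0F1_def pochhammer_Suc fact_Suc mult_ac)
  ultimately have "(real n + 1) * (b + real n) * ?a (Suc n) = c * ?a n"
    by simp
  then show "fps_nth (fps_X * fps_deriv (fps_deriv (fps_0F1 b c)) + fps_const b * fps_deriv (fps_0F1 b c)) n
           = fps_nth (fps_const c * fps_0F1 b c) n"
    by (cases n) (simp_all add: algebra_simps)
qed

lemma fps_conv_radius_deriv_infinite:
  fixes F :: "'a :: {banach, real_normed_field} fps"
  assumes "fps_conv_radius F = \<infinity>"
  shows "fps_conv_radius (fps_deriv F) = \<infinity>"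
  using fps_conv_radius_deriv[of F] assms by simp

lemma eval_fps_0F1_ode:
  assumes "0 < b"
  shows "t * eval_fps (fps_deriv (fps_deriv (fps_0F1 b c))) t + b * eval_fps (fps_deriv (fps_0F1 b c)) t
         = c * eval_fps (fps_0F1 b c) t"
proof -
  let ?F = "fps_0F1 b c"
  have R: "fps_conv_radius ?F = \<infinity>"
    using fps_conv_radius_0F1[OF assms] .
  then have R1: "fps_conv_radius (fps_deriv ?F) = \<infinity>"
    and R2: "fps_conv_radius (fps_deriv (fps_deriv ?F)) = \<infinity>"
    by (simp_all add: fps_conv_radius_deriv_infinite)
  have "eval_fps (fps_X * fps_deriv (fps_deriv ?F) + fps_const b * fps_deriv ?F) t
        = eval_fps (fps_const c * ?F) t"
    using fps_0F1_ode[OF assms] by simp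
  moreover have "fps_conv_radius (fps_X * fps_deriv (fps_deriv ?F)) = \<infinity>"
    and "fps_conv_radius (fps_const b * fps_deriv ?F) = \<infinity>"
    using fps_conv_radius_mult[of fps_X "fps_deriv (fps_deriv ?F)"]
      fps_conv_radius_mult[of "fps_const b" "fps_deriv ?F"] R1 R2 by simp_all
  ultimately show ?thesis
    using R R1 R2 by (simp add: eval_fps_add eval_fps_mult)
qed

lemma has_real_derivative_eval_fps_power:
  fixes F :: "real fps"
  assumes "fps_conv_radius F = \<infinity>"
  shows "((\<lambda>z. eval_fps F (z ^ n)) has_real_derivative
           real n * z ^ (n - 1) * eval_fps (fps_deriv F) (z ^ n)) (at z)"
proof -
  have "(eval_fps F has_real_derivative eval_fps (fps_deriv F) (z ^ n)) (at (z ^ n))"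
    using assms by (intro has_field_derivative_eval_fps) simp
  from DERIV_chain2[OF this DERIV_pow] show ?thesis
    by (simp add: mult_ac)
qed

lemma linear_ode2_solution_0F1_power:
  fixes c :: real
  assumes "2 \<le> n"
  defines "F \<equiv> fps_0F1 (1 - 1 / real n) c"
  shows "linear_ode2_solution (\<lambda>_. 0) (\<lambda>z. - (real n ^ 2 * c * z ^ (n - 2)))
           (\<lambda>z. eval_fps F (z ^ n)) (\<lambda>z. real n * z ^ (n - 1) * eval_fps (fps_deriv F) (z ^ n))"
proof -
  have b: "0 < 1 - 1 / real n"
    using assms(1) by (simp add: field_simps)
  have R: "fps_conv_radius F = \<infinity>"
    unfolding F_def using fps_conv_radius_0F1[OF b] .
  have R1: "fps_conv_radius (fps_deriv F) = \<infinity>"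
    using R by (rule fps_conv_radius_deriv_infinite)
  define F0 F1 F2 where "F0 = eval_fps F" and "F1 = eval_fps (fps_deriv F)"
    and "F2 = eval_fps (fps_deriv (fps_deriv F))"
  obtain m where n: "n = m + 2"
    using assms(1) by (metis add.commute le_iff_add)
  define y'' where "y'' z = real n * z ^ (n - 1) * (real n * z ^ (n - 1) * F2 (z ^ n))
    + real n * (real (n - 1) * z ^ (n - 1 - Suc 0)) * F1 (z ^ n)" for z
  have "((\<lambda>z. real n * z ^ (n - 1) * F1 (z ^ n)) has_real_derivative y'' z) (at z)" for z
    unfolding y''_def F1_def F2_def
    by (intro DERIV_mult' DERIV_cmult DERIV_pow has_real_derivative_eval_fps_power R1)
  moreover have "y'' z = real n ^ 2 * c * z ^ (n - 2) * F0 (z ^ n)" for z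
  proof -
    have ode: "z ^ n * F2 (z ^ n) = c * F0 (z ^ n) - (1 - 1 / real n) * F1 (z ^ n)"
      using eval_fps_0F1_ode[OF b, of "z ^ n" c] unfolding F0_def F1_def F2_def F_def
      by (simp add: algebra_simps)
    have "y'' z = real n * z ^ m * (real (m + 1) * F1 (z ^ n) + real n * (z ^ n * F2 (z ^ n)))"
      unfolding y''_def by (simp add: n algebra_simps power_add)
    also have "\<dots> = real n ^ 2 * c * z ^ (n - 2) * F0 (z ^ n)"
      unfolding ode by (simp add: n field_simps power2_eq_square)
    finally show ?thesis .
  qed
  ultimately show ?thesis
    unfolding linear_ode2_solution_def F0_def F1_def
    using has_real_derivative_eval_fps_power[OF R, of n]
    by (intro conjI allI exI[of _ y'']) simp_all
qed

lemma linear_ode2_solution_mult_0F1_power: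
  fixes c :: real
  assumes "2 \<le> n"
  defines "F \<equiv> fps_0F1 (1 + 1 / real n) c"
  shows "linear_ode2_solution (\<lambda>_. 0) (\<lambda>z. - (real n ^ 2 * c * z ^ (n - 2)))
           (\<lambda>z. z * eval_fps F (z ^ n))
           (\<lambda>z. eval_fps F (z ^ n) + real n * z ^ n * eval_fps (fps_deriv F) (z ^ n))"
proof -
  have b: "0 < 1 + 1 / real n"
    by (simp add: add_pos_nonneg)
  have R: "fps_conv_radius F = \<infinity>"
    unfolding F_def using fps_conv_radius_0F1[OF b] .
  have R1: "fps_conv_radius (fps_deriv F) = \<infinity>"
    using R by (rule fps_conv_radius_deriv_infinite)
  define F0 F1 F2 where "F0 = eval_fps F" and "F1 = eval_fps (fps_deriv F)"
    and "F2 = eval_fps (fps_deriv (fps_deriv F))"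
  obtain m where n: "n = m + 2"
    using assms(1) by (metis add.commute le_iff_add)
  have "((\<lambda>z. z * F0 (z ^ n)) has_real_derivative z * (real n * z ^ (n - 1) * F1 (z ^ n)) + 1 * F0 (z ^ n))
          (at z)" for z
    unfolding F0_def F1_def by (intro DERIV_mult' DERIV_ident has_real_derivative_eval_fps_power R)
  moreover have "z * (real n * z ^ (n - 1) * F1 (z ^ n)) + 1 * F0 (z ^ n)
                 = F0 (z ^ n) + real n * z ^ n * F1 (z ^ n)" for z
    by (simp add: n algebra_simps)
  ultimately have d1: "((\<lambda>z. z * F0 (z ^ n)) has_real_derivative F0 (z ^ n) + real n * z ^ n * F1 (z ^ n))
          (at z)" for z
    by metis
  define y'' where "y'' z = real n * z ^ (n - 1) * F1 (z ^ n)
    + (real n * z ^ n * (real n * z ^ (n - 1) * F2 (z ^ n))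
       + real n * (real n * z ^ (n - Suc 0)) * F1 (z ^ n))" for z
  have "((\<lambda>z. F0 (z ^ n) + real n * z ^ n * F1 (z ^ n)) has_real_derivative y'' z) (at z)" for z
    unfolding y''_def F0_def F1_def F2_def
    by (intro DERIV_add DERIV_mult' DERIV_cmult DERIV_pow has_real_derivative_eval_fps_power R R1)
  moreover have "y'' z = real n ^ 2 * c * z ^ (n - 2) * (z * F0 (z ^ n))" for z
  proof -
    have ode: "z ^ n * F2 (z ^ n) = c * F0 (z ^ n) - (1 + 1 / real n) * F1 (z ^ n)"
      using eval_fps_0F1_ode[OF b, of "z ^ n" c] unfolding F0_def F1_def F2_def F_def
      by (simp add: algebra_simps)
    have "y'' z = real n * z ^ (m + 1) * (real (n + 1) * F1 (z ^ n) + real n * (z ^ n * F2 (z ^ n)))"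
      unfolding y''_def by (simp add: n algebra_simps)
    also have "\<dots> = real n ^ 2 * c * z ^ (n - 2) * (z * F0 (z ^ n))"
      unfolding ode by (simp add: n field_simps power2_eq_square)
    finally show ?thesis .
  qed
  ultimately show ?thesis
    using d1 unfolding linear_ode2_solution_def F0_def F1_def
    by (intro conjI allI exI[of _ y'']) simp_all
qed

lemma u_sol_eq:
  fixes k :: nat and w :: real
  defines "c \<equiv> w * real k / real (k + 1) ^ 2" and "\<alpha> \<equiv> 1 / real (k + 1)"
  shows "u_sol k w = (\<lambda>z. exp z *
     (z * eval_fps (fps_0F1 (1 + \<alpha>) c) (z ^ (k + 1)) - eval_fps (fps_0F1 (1 - \<alpha>) c) (z ^ (k + 1))))"
proof
  fix z :: real
  have pow: "z ^ ((k + 1) * m) = (z ^ (k + 1)) ^ m" for m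
    by (rule power_mult)
  have "falling_fact (real m + \<alpha>) m = pochhammer (1 + \<alpha>) m"
    and "falling_fact (real m - \<alpha>) m = pochhammer (1 - \<alpha>) m" for m
    using falling_fact_eq_pochhammer[of m \<alpha>] falling_fact_eq_pochhammer[of m "- \<alpha>"]
    by (simp_all add: add.commute)
  then show "u_sol k w z = exp z *
     (z * eval_fps (fps_0F1 (1 + \<alpha>) c) (z ^ (k + 1)) - eval_fps (fps_0F1 (1 - \<alpha>) c) (z ^ (k + 1)))"
    unfolding u_sol_def Let_def eval_fps_def fps_0F1_def fps_nth_Abs_fps pow
      c_def[symmetric] \<alpha>_def[symmetric]
    by (simp add: algebra_simps)
qed

lemma linear_ode2_solution_u_sol:
  assumes "1 \<le> k"
  shows "\<exists>u'. linear_ode2_solution (\<lambda>_. -2) (\<lambda>z. 1 - w * real k * z ^ (k - 1)) (u_sol k w) u'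
              \<and> u_sol k w 0 = -1 \<and> u' 0 = 0"
proof -
  define c where "c = w * real k / real (k + 1) ^ 2"
  define A where "A = fps_0F1 (1 + 1 / real (k + 1)) c"
  define B where "B = fps_0F1 (1 - 1 / real (k + 1)) c"
  have q: "real (k + 1) ^ 2 * c * z ^ (k + 1 - 2) = w * real k * z ^ (k - 1)" for z
    by (simp add: c_def)
  define v where "v z = z * eval_fps A (z ^ (k + 1)) - eval_fps B (z ^ (k + 1))" for z
  define v' where "v' z = eval_fps A (z ^ (k + 1))
    + real (k + 1) * z ^ (k + 1) * eval_fps (fps_deriv A) (z ^ (k + 1))
    - real (k + 1) * z ^ (k + 1 - 1) * eval_fps (fps_deriv B) (z ^ (k + 1))" for z
  have u: "u_sol k w = (\<lambda>z. exp z * v z)"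
    unfolding u_sol_eq v_def A_def B_def c_def ..
  have "linear_ode2_solution (\<lambda>_. 0) (\<lambda>z. - (w * real k * z ^ (k - 1))) v v'"
    using linear_ode2_solution_diff[OF
        linear_ode2_solution_mult_0F1_power[of "k + 1" c] linear_ode2_solution_0F1_power[of "k + 1" c]]
      assms
    unfolding A_def B_def v_def[abs_def] v'_def[abs_def] q by simp
  then have "linear_ode2_solution (\<lambda>_. -2) (\<lambda>z. 1 - w * real k * z ^ (k - 1)) (u_sol k w)
               (\<lambda>z. exp z * (v z + v' z))"
    unfolding u by (rule linear_ode2_solution_exp_mult)
  moreover have "u_sol k w 0 = -1" "exp 0 * (v 0 + v' 0) = 0"
    using assms by (simp_all add: u v_def v'_def A_def B_def eval_fps_at_0 fps_0F1_def)
  ultimately show ?thesis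
    by (intro exI[of _ "\<lambda>z. exp z * (v z + v' z)"]) simp
qed

theorem lemma3p2:
  fixes k :: nat and w :: real
  assumes "k \<ge> 1" and "w > 0"
  shows "\<forall>u :: real \<Rightarrow> real.
           (\<exists>u' u'' :: real \<Rightarrow> real.
              (\<forall>z. (u has_real_derivative u' z) (at z)) \<and>
              (\<forall>z. (u' has_real_derivative u'' z) (at z)) \<and>
              (\<forall>z. u'' z - 2 * u' z + (1 - w * real k * z ^ (k - 1)) * u z = 0) \<and>
              u 0 = -1 \<and> u' 0 = 0)
           \<longleftrightarrow> u = u_sol k w"
proof -
  let ?b = "\<lambda>z. 1 - w * real k * z ^ (k - 1)"
  have ivp_iff: "(\<exists>u' u''.
              (\<forall>z. (u has_real_derivative u' z) (at z)) \<and>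
              (\<forall>z. (u' has_real_derivative u'' z) (at z)) \<and>
              (\<forall>z. u'' z - 2 * u' z + ?b z * u z = 0) \<and>
              u 0 = -1 \<and> u' 0 = 0)
        \<longleftrightarrow> (\<exists>u'. linear_ode2_solution (\<lambda>_. -2) ?b u u' \<and> u 0 = -1 \<and> u' 0 = 0)" for u
    unfolding linear_ode2_solution_def by auto
  obtain s' where "linear_ode2_solution (\<lambda>_. -2) ?b (u_sol k w) s'"
    and "u_sol k w 0 = -1" "s' 0 = 0"
    using linear_ode2_solution_u_sol[OF assms(1)] by blast
  moreover have "continuous_on UNIV (\<lambda>_::real. -2 :: real)" "continuous_on UNIV ?b"
    by (intro continuous_intros)+
  ultimately show ?thesis
    unfolding ivp_iff by (metis linear_ode2_solution_unique)
qed

end
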